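(* Let $\{p_\eta:\eta>0\}$ be a minimal exponential family of densities $p_\eta(x)=h(x)e^{\eta T(x)-A(\eta)}$ whose log-partition function has the form $A(\eta)=c_1\log\eta+c_2$ with constants $c_1\neq0$, $c_2\in\mathbb{R}$, and let $\ell$ denote the logarithmic loss. Fix $\eta,\eta_2>0$ and set $x=-\frac{\eta_2}{\eta}\exp\!\big(-\frac{\eta_2}{\eta}\big)\in[-1/e,0)$. Then the set of $\eta_1>0$ for which $\ell(p_{\eta_1},p_\eta)-\ell(p_{\eta_2},p_\eta)=0$ is exactly $\{-\eta\,W_0(x),\,-\eta\,W_{-1}(x)\}$, where $W_0$ and $W_{-1}$ are the two real branches of the Lambert function (the real solutions $w$ of $w e^{w}=x$ for $x\in[-1/e,0)$).
   Context: $\ell(p_{\eta_1},p_\eta)=\mathbb{E}[-\log p_{\eta_1}(Y)]$ for $Y\sim p_\eta$. A single-parameter exponential family is minimal if $T$ is not almost everywhere constant. *)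

theory Defs
  imports "HOL-Analysis.Analysis"
begin

definition expfam :: "('a \<Rightarrow> real) \<Rightarrow> ('a \<Rightarrow> real) \<Rightarrow> (real \<Rightarrow> real) \<Rightarrow> real \<Rightarrow> 'a \<Rightarrow> real" where
  "expfam h T A eta x = h x * exp (eta * T x - A eta)"

definition log_loss :: "'a measure \<Rightarrow> ('a \<Rightarrow> real) \<Rightarrow> ('a \<Rightarrow> real) \<Rightarrow> real" where
  "log_loss M q p = (\<integral>y. - ln (q y) \<partial>(density M (\<lambda>x. ennreal (p x))))"

definition LambertW0 :: "real \<Rightarrow> real" where
  "LambertW0 x = (THE w. -1 \<le> w \<and> w * exp w = x)"

definition LambertWm1 :: "real \<Rightarrow> real" where
  "LambertWm1 x = (THE w. w \<le> -1 \<and> w * exp w = x)"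

end

(*
  Write p_t for the density with parameter t and m = E_eta[T]. Since ln p_t - ln p_eta is affine in T,
  l(p_t, p_eta) - l(p_eta, p_eta) = A t - A eta - (t - eta) m. By Gibbs' inequality this is nonnegative, and it
  vanishes at t = eta; so its derivative at eta vanishes, i.e. m = A'(eta) = c1 / eta. Consequently
  l(p_t, p_eta) - l(p_eta2, p_eta) = c1 ((ln t - t / eta) - (ln eta2 - eta2 / eta)), which is zero iff
  w = -t / eta solves w e^w = x. As w e^w decreases on (-inf, -1] and increases on [-1, inf), the solutions
  are exactly W_0(x) and W_{-1}(x).
*)

theory Submission
  imports Defs "HOL-Real_Asymp.Real_Asymp"
begin

lemma has_real_derivative_mult_exp:
  "((\<lambda>w::real. w * exp w) has_real_derivative (1 + w) * exp w) (at w)"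
  by (auto intro!: derivative_eq_intros simp: algebra_simps)

lemma strict_mono_on_mult_exp: "strict_mono_on {-1..} (\<lambda>w::real. w * exp w)"
proof (rule strict_mono_onI)
  fix a b :: real
  assume "a \<in> {-1..}" "a < b"
  then have "\<exists>d. ((\<lambda>w. w * exp w) has_real_derivative d) (at x) \<and> 0 < d" if "a < x" for x
    using has_real_derivative_mult_exp[of x] that by (intro exI[of _ "(1 + x) * exp x"]) auto
  moreover have "continuous_on {a..b} (\<lambda>w. w * exp w)"
    by (intro continuous_intros)
  ultimately show "a * exp a < b * exp b"
    using DERIV_pos_imp_increasing_open[of a b "\<lambda>w. w * exp w"] \<open>a < b\<close> by blast
qed

lemma strict_antimono_on_mult_exp: "strict_antimono_on {..-1} (\<lambda>w::real. w * exp w)"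
proof (rule monotone_onI)
  fix a b :: real
  assume "b \<in> {..-1}" "a < b"
  then have "\<exists>d. ((\<lambda>w. w * exp w) has_real_derivative d) (at x) \<and> d < 0" if "x < b" for x
    using has_real_derivative_mult_exp[of x] that
    by (intro exI[of _ "(1 + x) * exp x"]) (auto intro!: mult_neg_pos)
  moreover have "continuous_on {a..b} (\<lambda>w. w * exp w)"
    by (intro continuous_intros)
  ultimately show "b * exp b < a * exp a"
    using DERIV_neg_imp_decreasing_open[of a b "\<lambda>w. w * exp w"] \<open>a < b\<close> by blast
qed

lemma inj_on_mult_exp_atLeast: "inj_on (\<lambda>w::real. w * exp w) {-1..}"
  using strict_mono_on_mult_exp by (rule strict_mono_on_imp_inj_on)

lemma inj_on_mult_exp_atMost: "inj_on (\<lambda>w::real. w * exp w) {..-1}"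
  using strict_antimono_on_mult_exp strict_antimono_iff_antimono by blast

lemma mult_exp_ge_minus_exp_minus_one: "- exp (-1) \<le> w * exp (w::real)"
proof (cases "w < -1")
  case True
  then show ?thesis
    using monotone_onD[OF strict_antimono_on_mult_exp, of w "-1"] by simp
next
  case False
  then show ?thesis
    using monotone_onD[OF strict_mono_on_mult_exp, of "-1" w] by (cases "w = -1") auto
qed

lemma LambertW0:
  assumes "- exp (-1) \<le> x"
  shows "-1 \<le> LambertW0 x" and "LambertW0 x * exp (LambertW0 x) = x"
proof -
  have "max 0 x \<le> max 0 x * exp (max 0 x)"
    by (cases "x \<le> 0") (auto simp: mult_le_cancel_left1)
  then have "\<exists>w. -1 \<le> w \<and> w \<le> max 0 x \<and> w * exp w = x"
    using assms by (intro IVT[of "\<lambda>w. w * exp w"]) (auto intro!: continuous_intros)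
  then have "\<exists>!w. -1 \<le> w \<and> w * exp w = x"
    using inj_on_mult_exp_atLeast by (auto dest: inj_onD)
  then have "-1 \<le> LambertW0 x \<and> LambertW0 x * exp (LambertW0 x) = x"
    unfolding LambertW0_def by (rule theI')
  then show "-1 \<le> LambertW0 x" and "LambertW0 x * exp (LambertW0 x) = x"
    by auto
qed

lemma LambertWm1:
  assumes "- exp (-1) \<le> x" and "x < 0"
  shows "LambertWm1 x \<le> -1" and "LambertWm1 x * exp (LambertWm1 x) = x"
proof -
  have "((\<lambda>w::real. w * exp w) \<longlongrightarrow> 0) at_bot"
    by real_asymp
  then have "eventually (\<lambda>w. x < w * exp w) at_bot"
    using \<open>x < 0\<close> by (rule order_tendstoD)
  then obtain a where a: "a \<le> -1" "x < a * exp a"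
    unfolding eventually_at_bot_linorder by (metis min.cobounded1 min.cobounded2)
  have "\<exists>w. a \<le> w \<and> w \<le> -1 \<and> w * exp w = x"
    using assms a by (intro IVT2[of "\<lambda>w. w * exp w"]) (auto intro!: continuous_intros)
  then have "\<exists>!w. w \<le> -1 \<and> w * exp w = x"
    using inj_on_mult_exp_atMost by (auto dest: inj_onD)
  then have "LambertWm1 x \<le> -1 \<and> LambertWm1 x * exp (LambertWm1 x) = x"
    unfolding LambertWm1_def by (rule theI')
  then show "LambertWm1 x \<le> -1" and "LambertWm1 x * exp (LambertWm1 x) = x"
    by auto
qed

lemma mult_exp_eq_iff_LambertW:
  assumes "- exp (-1) \<le> x" and "x < 0"
  shows "w * exp w = x \<longleftrightarrow> w = LambertW0 x \<or> w = LambertWm1 x"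
proof
  assume w: "w * exp w = x"
  show "w = LambertW0 x \<or> w = LambertWm1 x"
  proof (cases "-1 \<le> w")
    case True
    have "w = LambertW0 x"
      using inj_on_mult_exp_atLeast by (rule inj_onD) (use True w LambertW0[OF assms(1)] in auto)
    then show ?thesis ..
  next
    case False
    have "w = LambertWm1 x"
      using inj_on_mult_exp_atMost by (rule inj_onD) (use False w LambertWm1[OF assms] in auto)
    then show ?thesis ..
  qed
qed (use LambertW0[OF assms(1)] LambertWm1[OF assms] in auto)

lemma ln_minus_divide_eq_iff_LambertW:
  fixes a b :: real
  assumes "0 < a" and "0 < b"
  shows "{t. 0 < t \<and> ln t - t / a = ln b - b / a}
         = (let x = - (b / a) * exp (- (b / a)) in {- a * LambertW0 x, - a * LambertWm1 x})"
proof -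
  define x where "x = - (b / a) * exp (- (b / a))"
  have x: "- exp (-1) \<le> x" "x < 0"
    using mult_exp_ge_minus_exp_minus_one[of "- (b / a)"] assms by (auto simp: x_def)
  have exp_ln_minus: "exp (ln u - u / a) = u * exp (- (u / a))" if "0 < u" for u
    using that by (simp add: exp_diff exp_minus divide_inverse)
  have W_iff: "(- (t / a)) * exp (- (t / a)) = x \<longleftrightarrow> t * exp (- (t / a)) = b * exp (- (b / a))"
    for t
    using \<open>0 < a\<close> by (auto simp: x_def)
  have level_iff: "0 < t \<and> ln t - t / a = ln b - b / a \<longleftrightarrow> (- (t / a)) * exp (- (t / a)) = x"
    for t
  proof (cases "0 < t")
    case True
    have "ln t - t / a = ln b - b / a \<longleftrightarrow> exp (ln t - t / a) = exp (ln b - b / a)"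
      by simp
    with True show ?thesis
      using exp_ln_minus[OF True] exp_ln_minus[OF \<open>0 < b\<close>] W_iff by simp
  next
    case False
    then have "0 \<le> - (t / a)"
      using \<open>0 < a\<close> by (simp add: divide_nonpos_pos)
    then have "0 \<le> (- (t / a)) * exp (- (t / a))"
      by (rule mult_nonneg_nonneg) simp
    with False show ?thesis
      using \<open>x < 0\<close> by simp
  qed
  have "(- (t / a)) * exp (- (t / a)) = x \<longleftrightarrow> t \<in> {- a * LambertW0 x, - a * LambertWm1 x}"
    for t
  proof -
    have "- (t / a) = w \<longleftrightarrow> t = - a * w" for w
      using \<open>0 < a\<close> by (auto simp: field_simps)
    then show ?thesis
      using mult_exp_eq_iff_LambertW[OF x, of "- (t / a)"] by simp
  qed
  then show ?thesis
    unfolding level_iff x_def[symmetric] Let_def by blast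
qed

lemma diff_le_mult_ln_diff:
  fixes p q :: real
  assumes "0 \<le> p" and "0 \<le> q" and "q = 0 \<Longrightarrow> p = 0"
  shows "p - q \<le> p * (ln p - ln q)"
proof (cases "p = 0")
  case False
  with assms have "0 < p" "0 < q"
    by (auto simp: less_le)
  then have "ln (q / p) \<le> q / p - 1"
    by (intro ln_le_minus_one) simp
  then have "p * (ln q - ln p) \<le> p * (q / p - 1)"
    using \<open>0 < p\<close> \<open>0 < q\<close> by (simp add: ln_div)
  then show ?thesis
    using \<open>0 < p\<close> by (simp add: algebra_simps)
qed (use assms in simp)

lemma log_loss_eq_integral:
  assumes "p \<in> borel_measurable M" and "q \<in> borel_measurable M" and "AE x in M. 0 \<le> p x"
  shows "log_loss M q p = (\<integral>x. p x * - ln (q x) \<partial>M)"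
  unfolding log_loss_def using assms by (subst integral_density) auto

lemma log_loss_self_le:
  fixes p q :: "'a \<Rightarrow> real"
  assumes [measurable]: "p \<in> borel_measurable M" "q \<in> borel_measurable M"
    and p_nonneg: "\<And>x. x \<in> space M \<Longrightarrow> 0 \<le> p x"
    and q_nonneg: "\<And>x. x \<in> space M \<Longrightarrow> 0 \<le> q x"
    and support: "\<And>x. x \<in> space M \<Longrightarrow> q x = 0 \<Longrightarrow> p x = 0"
    and "integrable M p" and "integrable M q" and mass: "integral\<^sup>L M q \<le> integral\<^sup>L M p"
    and loss_q: "integrable (density M p) (\<lambda>y. - ln (q y))"
    and loss_p: "integrable (density M p) (\<lambda>y. - ln (p y))"
  shows "log_loss M p p \<le> log_loss M q p"
proof -
  have p_AE: "AE x in M. 0 \<le> p x"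
    using p_nonneg by auto
  have int_q: "integrable M (\<lambda>x. p x * - ln (q x))"
    and int_p: "integrable M (\<lambda>x. p x * - ln (p x))"
    using loss_q loss_p by (simp_all add: integrable_density[OF _ _ p_AE])
  have "log_loss M p p \<le> log_loss M p p + (integral\<^sup>L M p - integral\<^sup>L M q)"
    using mass by simp
  also have "\<dots> = (\<integral>x. p x * - ln (p x) + (p x - q x) \<partial>M)"
    using int_p \<open>integrable M p\<close> \<open>integrable M q\<close> by (simp add: log_loss_eq_integral[OF _ _ p_AE])
  also have "\<dots> \<le> (\<integral>x. p x * - ln (q x) \<partial>M)"
  proof (rule integral_mono)
    fix x
    assume "x \<in> space M"
    then show "p x * - ln (p x) + (p x - q x) \<le> p x * - ln (q x)"
      using diff_le_mult_ln_diff[OF p_nonneg q_nonneg support] by (simp add: algebra_simps)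
  qed (use int_p int_q \<open>integrable M p\<close> \<open>integrable M q\<close> in auto)
  also have "\<dots> = log_loss M q p"
    by (simp add: log_loss_eq_integral[OF _ _ p_AE])
  finally show ?thesis .
qed

locale exponential_family =
  fixes M :: "'a measure" and h T :: "'a \<Rightarrow> real" and A :: "real \<Rightarrow> real"
  assumes h_measurable [measurable]: "h \<in> borel_measurable M"
    and T_measurable [measurable]: "T \<in> borel_measurable M"
    and h_nonneg: "\<And>x. x \<in> space M \<Longrightarrow> 0 \<le> h x"
    and integrable_expfam: "\<And>e. 0 < e \<Longrightarrow> integrable M (expfam h T A e)"
    and integral_expfam: "\<And>e. 0 < e \<Longrightarrow> (\<integral>x. expfam h T A e x \<partial>M) = 1"
    and integrable_log_loss: "\<And>e t. 0 < e \<Longrightarrow> 0 < t \<Longrightarrow>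
          integrable (density M (\<lambda>x. ennreal (expfam h T A e x))) (\<lambda>y. - ln (expfam h T A t y))"
begin

definition mean_T :: "real \<Rightarrow> real" where
  "mean_T e = (\<integral>x. expfam h T A e x * T x \<partial>M)"

lemma expfam_measurable [measurable]: "expfam h T A e \<in> borel_measurable M"
  unfolding expfam_def by measurable

lemma expfam_nonneg: "x \<in> space M \<Longrightarrow> 0 \<le> expfam h T A e x"
  unfolding expfam_def using h_nonneg by simp

lemma AE_expfam_nonneg: "AE x in M. 0 \<le> expfam h T A e x"
  using expfam_nonneg by auto

lemma log_loss_integrand_diff:
  assumes "x \<in> space M"
  shows "expfam h T A e x * - ln (expfam h T A t x) - expfam h T A e x * - ln (expfam h T A e x)
         = expfam h T A e x * (A t - A e - (t - e) * T x)"
proof (cases "h x = 0")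
  case False
  then have "0 < h x"
    using h_nonneg[OF assms] by simp
  then have ln_expfam: "ln (expfam h T A s x) = ln (h x) + (s * T x - A s)" for s
    unfolding expfam_def by (simp add: ln_mult)
  show ?thesis
    unfolding ln_expfam by (simp add: algebra_simps)
qed (simp add: expfam_def)

lemma integrable_log_loss_integrand:
  "0 < e \<Longrightarrow> 0 < t \<Longrightarrow> integrable M (\<lambda>x. expfam h T A e x * - ln (expfam h T A t x))"
  using integrable_log_loss[of e t] by (simp add: integrable_density[OF _ _ AE_expfam_nonneg])

lemma integrable_expfam_mult_T:
  assumes "0 < e"
  shows "integrable M (\<lambda>x. expfam h T A e x * T x)"
proof -
  \<comment> \<open>up to a multiple of the density, the difference of two finite log losses\<close>
  let ?f = "\<lambda>x. (A (e + 1) - A e) * expfam h T A e x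
    - (expfam h T A e x * - ln (expfam h T A (e + 1) x) - expfam h T A e x * - ln (expfam h T A e x))"
  have "integrable M ?f"
    using assms integrable_expfam integrable_log_loss_integrand by simp
  moreover have "?f x = expfam h T A e x * T x" if "x \<in> space M" for x
    using log_loss_integrand_diff[OF that, of e "e + 1"] by (simp add: algebra_simps)
  then have "integrable M ?f \<longleftrightarrow> integrable M (\<lambda>x. expfam h T A e x * T x)"
    by (intro Bochner_Integration.integrable_cong) simp_all
  ultimately show ?thesis
    by simp
qed

lemma log_loss_diff:
  assumes "0 < e" and "0 < t"
  shows "log_loss M (expfam h T A t) (expfam h T A e) - log_loss M (expfam h T A e) (expfam h T A e)
         = A t - A e - (t - e) * mean_T e"
proof -
  have loss_integral:
    "log_loss M (expfam h T A r) (expfam h T A e) = (\<integral>x. expfam h T A e x * - ln (expfam h T A r x) \<partial>M)"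
    for r
    by (rule log_loss_eq_integral) (simp_all add: AE_expfam_nonneg)
  have "log_loss M (expfam h T A t) (expfam h T A e) - log_loss M (expfam h T A e) (expfam h T A e)
        = (\<integral>x. expfam h T A e x * - ln (expfam h T A t x)
                - expfam h T A e x * - ln (expfam h T A e x) \<partial>M)"
    unfolding loss_integral
    by (rule Bochner_Integration.integral_diff[symmetric]) (intro integrable_log_loss_integrand assms)+
  also have "\<dots> = (\<integral>x. (A t - A e) * expfam h T A e x - (t - e) * (expfam h T A e x * T x) \<partial>M)"
    by (rule Bochner_Integration.integral_cong)
       (use log_loss_integrand_diff[of _ e t] in \<open>simp_all add: algebra_simps\<close>)
  also have "\<dots> = A t - A e - (t - e) * mean_T e"
    using assms integrable_expfam integral_expfam integrable_expfam_mult_T by (simp add: mean_T_def)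
  finally show ?thesis .
qed

lemma log_loss_sub_log_loss:
  assumes "0 < e" and "0 < t" and "0 < s"
  shows "log_loss M (expfam h T A t) (expfam h T A e) - log_loss M (expfam h T A s) (expfam h T A e)
         = A t - A s - (t - s) * mean_T e"
  using log_loss_diff[OF assms(1,2)] log_loss_diff[OF assms(1,3)] by (simp add: algebra_simps)

lemma log_loss_diff_nonneg:
  assumes "0 < e" and "0 < t"
  shows "0 \<le> A t - A e - (t - e) * mean_T e"
proof -
  have "log_loss M (expfam h T A e) (expfam h T A e) \<le> log_loss M (expfam h T A t) (expfam h T A e)"
  proof (rule log_loss_self_le)
    show "integrable (density M (expfam h T A e)) (\<lambda>y. - ln (expfam h T A t y))"
      and "integrable (density M (expfam h T A e)) (\<lambda>y. - ln (expfam h T A e y))"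
      using integrable_log_loss assms by simp_all
    show "expfam h T A e x = 0" if "expfam h T A t x = 0" for x
      using that by (simp add: expfam_def)
  qed (simp_all add: assms expfam_nonneg integrable_expfam integral_expfam)
  then show ?thesis
    using log_loss_diff[OF assms] by simp
qed

lemma mean_T_eq_deriv:
  assumes "0 < e" and deriv: "(A has_real_derivative d) (at e)"
  shows "mean_T e = d"
proof -
  define \<phi> where "\<phi> t = A t - A e - (t - e) * mean_T e" for t
  have "(\<phi> has_real_derivative d - mean_T e) (at e)"
    unfolding \<phi>_def by (auto intro!: derivative_eq_intros deriv)
  moreover have "\<forall>t. \<bar>e - t\<bar> < e \<longrightarrow> \<phi> e \<le> \<phi> t"
    using log_loss_diff_nonneg[OF \<open>0 < e\<close>] by (auto simp: \<phi>_def)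
  ultimately have "d - mean_T e = 0"
    using \<open>0 < e\<close> DERIV_local_min by blast
  then show ?thesis
    by simp
qed

end

theorem theorem6:
  fixes M :: "'a measure" and h T :: "'a \<Rightarrow> real" and A :: "real \<Rightarrow> real"
    and c1 c2 eta eta2 :: real
  assumes h_meas: "h \<in> borel_measurable M"
    and T_meas: "T \<in> borel_measurable M"
    and h_nonneg: "\<And>x. x \<in> space M \<Longrightarrow> 0 \<le> h x"
    and dens: "\<And>e. 0 < e \<Longrightarrow> integrable M (expfam h T A e) \<and> (\<integral>x. expfam h T A e x \<partial>M) = 1"
    and minimal: "\<not> (\<exists>c. AE x in M. T x = c)"
    and A_form: "\<And>e. 0 < e \<Longrightarrow> A e = c1 * ln e + c2"
    and c1_ne: "c1 \<noteq> 0"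
    and loss_finite: "\<And>e e1. 0 < e \<Longrightarrow> 0 < e1 \<Longrightarrow>
          integrable (density M (\<lambda>x. ennreal (expfam h T A e x))) (\<lambda>y. - ln (expfam h T A e1 y))"
    and eta_pos: "0 < eta" and eta2_pos: "0 < eta2"
  shows "{eta1. 0 < eta1 \<and>
            log_loss M (expfam h T A eta1) (expfam h T A eta)
            - log_loss M (expfam h T A eta2) (expfam h T A eta) = 0}
         = (let x = - (eta2 / eta) * exp (- (eta2 / eta))
            in {- eta * LambertW0 x, - eta * LambertWm1 x})"
proof -
  interpret exponential_family M h T A
    using h_meas T_meas h_nonneg dens loss_finite by unfold_locales auto
  have "((\<lambda>e. c1 * ln e + c2) has_real_derivative c1 / eta) (at eta)"
    using eta_pos by (auto intro!: derivative_eq_intros simp: field_simps)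
  then have "(A has_real_derivative c1 / eta) (at eta)"
    by (rule has_field_derivative_transform_within_open[of _ _ _ "{0<..}"])
       (use eta_pos A_form in auto)
  then have mean: "mean_T eta = c1 / eta"
    by (rule mean_T_eq_deriv[OF eta_pos])
  have loss_diff: "log_loss M (expfam h T A t) (expfam h T A eta)
      - log_loss M (expfam h T A eta2) (expfam h T A eta) = c1 * ((ln t - t / eta) - (ln eta2 - eta2 / eta))"
    if "0 < t" for t
    unfolding log_loss_sub_log_loss[OF eta_pos that eta2_pos] mean
    using eta_pos by (simp add: A_form that eta2_pos field_simps)
  have "{eta1. 0 < eta1 \<and>
            log_loss M (expfam h T A eta1) (expfam h T A eta)
            - log_loss M (expfam h T A eta2) (expfam h T A eta) = 0}
        = {t. 0 < t \<and> ln t - t / eta = ln eta2 - eta2 / eta}"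
    by (intro Collect_cong conj_cong refl) (simp add: loss_diff c1_ne)
  also have "\<dots> = (let x = - (eta2 / eta) * exp (- (eta2 / eta))
            in {- eta * LambertW0 x, - eta * LambertWm1 x})"
    using eta_pos eta2_pos by (rule ln_minus_divide_eq_iff_LambertW)
  finally show ?thesis .
qed

end
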